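(* Let $n\geq1$, $\beta>0$, and let $f(\xi)\in\mathbb{Z}_p[\xi_1,\ldots,\xi_n]$ be an elliptic polynomial of degree $d$. Let $A=\{\xi\in\mathbb{Z}_p^n: |\xi_i|_p=1\text{ for some }i\}$ and let $M$ be a positive integer such that $|f(\xi)|_p\geq p^{-M}$ for all $\xi\in A$. For $t>0$ and $x\in\mathbb{Q}_p^n$ put $Z_0(x,t)=\int_{\mathbb{Z}_p^n}\Psi(x\cdot\xi)e^{-t|f(\xi)|_p^{\beta}}\,d\xi$. Then there exist constants $R>0$ and $C>0$ such that whenever $\|x\|_p\geq R$, $t>0$ and $p^{(M+1)d\beta}\,t\,\|x\|_p^{-d\beta}\leq1$, one has \[ |Z_0(x,t)|\leq C\,t\,\|x\|_p^{-d\beta-n}. \]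
   Context: $\mathbb{Q}_p$ is the field of $p$-adic numbers, $\mathbb{Z}_p$ its ring of integers, $|\cdot|_p$ the $p$-adic absolute value, $\|x\|_p=\max_i|x_i|_p$. $d\xi$ is the Haar measure on $\mathbb{Q}_p^n$ with $\mathbb{Z}_p^n$ of measure $1$. $\Psi$ is the standard additive character of $\mathbb{Q}_p$, $\Psi(a)=\exp(2\pi i\{a\}_p)$ where $\{a\}_p$ is the fractional part of $a$, and $x\cdot\xi=\sum_i x_i\xi_i$. A polynomial $f\in\mathbb{Q}_p[\xi_1,\dots,\xi_n]$ is elliptic of degree $d$ if it is a non-constant homogeneous polynomial of degree $d$ and $f(\xi)=0\iff\xi=0$. *)

theory Defs
  imports "HOL-Probability.Probability"
begin

text \<open>p-adic integers as compatible residue sequences: a k = (a mod p^k) in {0..<p^k}.\<close>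
definition Zp :: "nat \<Rightarrow> (nat \<Rightarrow> nat) set" where
  "Zp p = {a. \<forall>k. a k < p ^ k \<and> a k = a (Suc k) mod p ^ k}"

definition padic_val :: "nat \<Rightarrow> (nat \<Rightarrow> nat) \<Rightarrow> nat" where
  "padic_val p a = (LEAST k. a (Suc k) \<noteq> 0)"

definition padic_abs :: "nat \<Rightarrow> (nat \<Rightarrow> nat) \<Rightarrow> real" where
  "padic_abs p a = (if a = (\<lambda>k. 0) then 0 else 1 / real p ^ padic_val p a)"

definition zp_norm :: "nat \<Rightarrow> nat \<Rightarrow> (nat \<Rightarrow> nat \<Rightarrow> nat) \<Rightarrow> real" where
  "zp_norm p n y = Max ((\<lambda>i. padic_abs p (y i)) ` {..<n})"

definition zp_dot :: "nat \<Rightarrow> nat \<Rightarrow> (nat \<Rightarrow> nat \<Rightarrow> nat) \<Rightarrow> (nat \<Rightarrow> nat \<Rightarrow> nat) \<Rightarrow> nat \<Rightarrow> nat" where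
  "zp_dot p n y xi = (\<lambda>k. (\<Sum>i<n. y i k * xi i k) mod p ^ k)"

definition zp_poly_eval :: "nat \<Rightarrow> nat \<Rightarrow> (nat \<Rightarrow> nat) set \<Rightarrow> ((nat \<Rightarrow> nat) \<Rightarrow> nat \<Rightarrow> nat)
    \<Rightarrow> (nat \<Rightarrow> nat \<Rightarrow> nat) \<Rightarrow> nat \<Rightarrow> nat" where
  "zp_poly_eval p n S c xi = (\<lambda>k. (\<Sum>\<alpha>\<in>S. c \<alpha> k * (\<Prod>i<n. xi i k ^ \<alpha> i)) mod p ^ k)"

text \<open>Haar measure on Zp: image of i.i.d. uniform digits; on Zp^n: product measure.\<close>
definition digit_space :: "nat \<Rightarrow> (nat \<Rightarrow> nat) measure" where
  "digit_space p = PiM UNIV (\<lambda>_::nat. uniform_measure (count_space UNIV) {..<p})"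

definition zp_of_digits :: "nat \<Rightarrow> (nat \<Rightarrow> nat) \<Rightarrow> nat \<Rightarrow> nat" where
  "zp_of_digits p d = (\<lambda>k. \<Sum>j<k. d j * p ^ j)"

definition zp_haar :: "nat \<Rightarrow> (nat \<Rightarrow> nat) measure" where
  "zp_haar p = distr (digit_space p) (PiM UNIV (\<lambda>_::nat. count_space UNIV)) (zp_of_digits p)"

definition zpn_haar :: "nat \<Rightarrow> nat \<Rightarrow> (nat \<Rightarrow> nat \<Rightarrow> nat) measure" where
  "zpn_haar p n = PiM {..<n} (\<lambda>_. zp_haar p)"

text \<open>A point x of Q_p^n is represented as x = p^(-m) * y with m :: nat and y in Zp^n
  (every x in Q_p^n has such a representation). Then ||x||_p = p^m * ||y||_p and, for
  xi in Zp^n, {x . xi}_p = ((y . xi) mod p^m) / p^m, so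
  Psi(x . xi) = exp(2 pi i ((y . xi) mod p^m) / p^m).\<close>
definition Psi_rep :: "nat \<Rightarrow> nat \<Rightarrow> nat \<Rightarrow> (nat \<Rightarrow> nat \<Rightarrow> nat) \<Rightarrow> (nat \<Rightarrow> nat \<Rightarrow> nat) \<Rightarrow> complex" where
  "Psi_rep p n m y xi = cis (2 * pi * real (zp_dot p n y xi m) / real p ^ m)"

definition qp_norm_rep :: "nat \<Rightarrow> nat \<Rightarrow> nat \<Rightarrow> (nat \<Rightarrow> nat \<Rightarrow> nat) \<Rightarrow> real" where
  "qp_norm_rep p n m y = real p ^ m * zp_norm p n y"

definition Z0 :: "nat \<Rightarrow> nat \<Rightarrow> (nat \<Rightarrow> nat) set \<Rightarrow> ((nat \<Rightarrow> nat) \<Rightarrow> nat \<Rightarrow> nat) \<Rightarrow> real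
    \<Rightarrow> nat \<Rightarrow> (nat \<Rightarrow> nat \<Rightarrow> nat) \<Rightarrow> real \<Rightarrow> complex" where
  "Z0 p n S c \<beta> m y t = (LINT xi | zpn_haar p n.
      Psi_rep p n m y xi * complex_of_real (exp (- t * padic_abs p (zp_poly_eval p n S c xi) powr \<beta>)))"

end

(* Write x = p^(-m) y, so that ||x||_p = p^L, and put J = L - M - 1. Off the ball p^J Z_p^n we have
   xi = p^j eta with j < J and eta on the unit sphere, so by homogeneity and |f(eta)|_p >= p^(-M) the
   value |f(xi)|_p only depends on xi modulo p^(j+M+1). It is therefore unchanged by the
   measure-preserving map adding p^(L-1) to a coordinate xi_i0 at which ||x||_p is attained, whereas
   this map multiplies Psi(x . xi) by a nontrivial p-th root of unity. Hence the integral of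
   Psi(x . xi) times (exp(-t |f(xi)|_p^beta) off the ball, 1 on it) vanishes. What is left is the
   integral over the ball of Psi(x . xi) (exp(-t |f(xi)|_p^beta) - 1), whose integrand is bounded by
   t p^(-d J beta) since |f(xi)|_p <= p^(-d J) there; the ball has measure p^(-n J). *)

theory Submission
  imports Defs
begin

section \<open>Integrals of twisted-invariant functions\<close>

lemma distr_PiM_componentwise:
  assumes M: "\<And>i. i \<in> I \<Longrightarrow> prob_space (M i)"
    and f[measurable]: "\<And>i. i \<in> I \<Longrightarrow> f i \<in> measurable (M i) (N i)"
  shows "distr (PiM I M) (PiM I N) (\<lambda>x. \<lambda>i\<in>I. f i (x i)) = PiM I (\<lambda>i. distr (M i) (N i) (f i))"
proof (rule measure_eqI_PiM_infinite[symmetric, where M=N])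
  show "sets (PiM I (\<lambda>i. distr (M i) (N i) (f i))) = sets (PiM I N)"
    by (intro sets_PiM_cong) auto
  show "sets (distr (PiM I M) (PiM I N) (\<lambda>x. \<lambda>i\<in>I. f i (x i))) = sets (PiM I N)" by simp
  have P: "\<And>i. i \<in> I \<Longrightarrow> prob_space (distr (M i) (N i) (f i))"
    using M f by (simp add: prob_space.prob_space_distr)
  then interpret prob_space "PiM I (\<lambda>i. distr (M i) (N i) (f i))"
    by (intro prob_space_PiM) auto
  show "finite_measure (PiM I (\<lambda>i. distr (M i) (N i) (f i)))" by unfold_locales
  fix A J assume J: "finite J" "J \<subseteq> I" and A: "\<And>i. i \<in> J \<Longrightarrow> A i \<in> sets (N i)"
  have "emeasure (PiM I (\<lambda>i. distr (M i) (N i) (f i))) (prod_emb I N J (Pi\<^sub>E J A))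
     = (\<Prod>i\<in>J. emeasure (distr (M i) (N i) (f i)) (A i))"
    using J A P by (subst emeasure_PiM_emb[symmetric]) (auto simp: prod_emb_def)
  also have "\<dots> = (\<Prod>i\<in>J. emeasure (M i) (f i -` A i \<inter> space (M i)))"
    using J A by (intro prod.cong refl emeasure_distr) auto
  also have "\<dots> = emeasure (PiM I M) (prod_emb I M J (Pi\<^sub>E J (\<lambda>i. f i -` A i \<inter> space (M i))))"
    using J A M by (intro emeasure_PiM_emb[symmetric]) auto
  also have "prod_emb I M J (Pi\<^sub>E J (\<lambda>i. f i -` A i \<inter> space (M i)))
     = (\<lambda>x. \<lambda>i\<in>I. f i (x i)) -` prod_emb I N J (Pi\<^sub>E J A) \<inter> space (PiM I M)"
    using J measurable_space[OF f]
    by (auto simp: prod_emb_def space_PiM PiE_iff Pi_iff subset_iff)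
  also have "emeasure (PiM I M) \<dots>
     = emeasure (distr (PiM I M) (PiM I N) (\<lambda>x. \<lambda>i\<in>I. f i (x i))) (prod_emb I N J (Pi\<^sub>E J A))"
    using J A by (intro emeasure_distr[symmetric] sets_PiM_I) auto
  finally show "emeasure (PiM I (\<lambda>i. distr (M i) (N i) (f i))) (prod_emb I N J (Pi\<^sub>E J A))
     = emeasure (distr (PiM I M) (PiM I N) (\<lambda>x. \<lambda>i\<in>I. f i (x i))) (prod_emb I N J (Pi\<^sub>E J A))" .
qed

lemma distr_uniform_count_space_bij:
  assumes f: "bij_betw f A A" and "finite A"
  shows "distr (uniform_measure (count_space UNIV) A) (uniform_measure (count_space UNIV) A) f
       = uniform_measure (count_space UNIV) A"
proof (rule measure_eqI)
  fix X :: "'a set"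
  have "f ` (A \<inter> f -` X) = f ` A \<inter> X"
    by auto
  then have "f ` (A \<inter> f -` X) = A \<inter> X"
    using bij_betw_imp_surj_on[OF f] by simp
  moreover have "inj_on f (A \<inter> f -` X)"
    using f by (auto simp: bij_betw_def intro: inj_on_subset)
  ultimately have "card (A \<inter> f -` X) = card (A \<inter> X)"
    by (metis card_image)
  then show "emeasure (distr (uniform_measure (count_space UNIV) A) (uniform_measure (count_space UNIV) A) f) X
      = emeasure (uniform_measure (count_space UNIV) A) X"
    using \<open>finite A\<close> by (simp add: emeasure_distr)
qed simp

lemma integral_eq_0_of_twisted_invariance:
  fixes f :: "'a \<Rightarrow> complex"
  assumes T: "T \<in> measurable M M" "distr M M T = M"
    and f: "f \<in> borel_measurable M"
    and twist: "AE x in M. f (T x) = \<zeta> * f x" and "\<zeta> \<noteq> 1"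
  shows "integral\<^sup>L M f = 0"
proof -
  have "integral\<^sup>L M f = integral\<^sup>L (distr M M T) f"
    using T by simp
  also have "\<dots> = (\<integral>x. f (T x) \<partial>M)"
    by (rule integral_distr[OF T(1) f])
  also have "\<dots> = (\<integral>x. \<zeta> * f x \<partial>M)"
    using twist f measurable_compose[OF T(1) f] by (intro integral_cong_AE) auto
  finally have "(1 - \<zeta>) * integral\<^sup>L M f = 0"
    by (simp add: algebra_simps)
  then show ?thesis
    using \<open>\<zeta> \<noteq> 1\<close> by simp
qed

lemma norm_integral_le_of_twisted_invariance_off:
  fixes \<psi> g :: "'a \<Rightarrow> complex"
  assumes "finite_measure M"
    and T: "T \<in> measurable M M" "distr M M T = M"
    and B: "B \<in> sets M" "\<And>x. x \<in> space M \<Longrightarrow> T x \<in> B \<longleftrightarrow> x \<in> B"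
    and \<psi>: "\<psi> \<in> borel_measurable M" "\<And>x. norm (\<psi> x) = 1"
    and \<psi>_twist: "AE x in M. \<psi> (T x) = \<zeta> * \<psi> x" and "\<zeta> \<noteq> 1"
    and g_inv: "AE x in M. x \<notin> B \<longrightarrow> g (T x) = g x"
    and g_near_1: "AE x in M. x \<in> B \<longrightarrow> norm (g x - 1) \<le> K" and "K \<ge> 0"
    and int: "integrable M (\<lambda>x. \<psi> x * g x)"
  shows "norm (\<integral>x. \<psi> x * g x \<partial>M) \<le> K * measure M B"
proof -
  interpret finite_measure M by fact
  define h where "h x = indicator B x *\<^sub>R (\<psi> x * (g x - 1))" for x
  have \<psi>_int: "integrable M \<psi>"
    using \<psi> by (intro integrable_const_bound[where B=1]) auto
  have h_int: "integrable M h"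
    unfolding h_def using B(1) int \<psi>_int
    by (intro integrable_mult_indicator) (auto simp: algebra_simps)
  \<comment> \<open>The function below is \<open>\<psi> g\<close> off \<open>B\<close> and \<open>\<psi>\<close> on \<open>B\<close>; as \<open>T\<close> preserves \<open>B\<close>, it is twisted-invariant.\<close>
  have "(\<integral>x. \<psi> x * g x - h x \<partial>M) = 0"
  proof (rule integral_eq_0_of_twisted_invariance[OF T _ _ \<open>\<zeta> \<noteq> 1\<close>])
    show "(\<lambda>x. \<psi> x * g x - h x) \<in> borel_measurable M"
      using int h_int by auto
    show "AE x in M. \<psi> (T x) * g (T x) - h (T x) = \<zeta> * (\<psi> x * g x - h x)"
      using \<psi>_twist g_inv AE_space
    proof eventually_elim
      case (elim x)
      then show ?case
        by (cases "x \<in> B") (simp_all add: h_def B(2) algebra_simps)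
    qed
  qed
  then have "(\<integral>x. \<psi> x * g x \<partial>M) = integral\<^sup>L M h"
    using int h_int by simp
  also have "norm \<dots> \<le> (\<integral>x. norm (h x) \<partial>M)"
    by (rule integral_norm_bound)
  also have "\<dots> \<le> (\<integral>x. K * indicator B x \<partial>M)"
  proof (rule integral_mono_AE')
    show "integrable M (\<lambda>x. K * indicator B x)"
      using B(1) emeasure_finite[of B]
      by (intro integrable_mult_right integrable_real_indicator) (auto simp: less_top[symmetric])
    show "AE x in M. norm (h x) \<le> K * indicator B x"
      using g_near_1 by eventually_elim (auto simp: h_def norm_mult \<psi>(2) split: split_indicator)
    show "AE x in M. 0 \<le> K * indicator B x"
      using \<open>K \<ge> 0\<close> by simp
  qed
  also have "\<dots> = K * measure M B"
    using B(1) by simp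
  finally show ?thesis .
qed

section \<open>p-adic integers as residue sequences\<close>

lemma Zp_less: "a \<in> Zp p \<Longrightarrow> a k < p ^ k"
  unfolding Zp_def by blast

lemma Zp_mod_Suc: "a \<in> Zp p \<Longrightarrow> a k = a (Suc k) mod p ^ k"
  unfolding Zp_def by blast

lemma ZpI: "(\<And>k. a k < p ^ k) \<Longrightarrow> (\<And>k. a k = a (Suc k) mod p ^ k) \<Longrightarrow> a \<in> Zp p"
  unfolding Zp_def by blast

lemma Zp_0: "a \<in> Zp p \<Longrightarrow> a 0 = 0"
  using Zp_less[of a p 0] by simp

lemma Zp_mod_le:
  assumes "a \<in> Zp p" "k \<le> K"
  shows "a k = a K mod p ^ k"
  using assms(2)
proof (induction K)
  case 0
  then show ?case using Zp_less[OF assms(1), of 0] by simp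
next
  case (Suc K)
  show ?case
  proof (cases "k = Suc K")
    case True
    then show ?thesis using Zp_less[OF assms(1), of "Suc K"] by (simp del: power_Suc)
  next
    case False
    then have "a k = a K mod p ^ k" using Suc by simp
    also have "\<dots> = a (Suc K) mod p ^ K mod p ^ k"
      using Zp_mod_Suc[OF assms(1), of K] by simp
    also have "\<dots> = a (Suc K) mod p ^ k"
      using False Suc.prems by (simp add: mod_mod_cancel le_imp_power_dvd)
    finally show ?thesis .
  qed
qed

lemma Zp_pow_dvd:
  assumes "a \<in> Zp p" "a j = 0" "j \<le> k"
  shows "p ^ j dvd a k"
  using Zp_mod_le[OF assms(1,3)] assms(2) by (simp add: mod_eq_0_iff_dvd)

lemma padic_abs_nonneg: "padic_abs p a \<ge> 0"
  by (simp add: padic_abs_def)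

lemma padic_val_eq_Least_mod:
  assumes "a \<in> Zp p" "p > 0" "a N \<noteq> 0"
  shows "padic_val p a = (LEAST k. a N mod p ^ Suc k \<noteq> 0)"
  unfolding padic_val_def
proof (intro arg_cong[where f = Least] ext)
  fix k
  show "a (Suc k) \<noteq> 0 \<longleftrightarrow> a N mod p ^ Suc k \<noteq> 0"
  proof (cases "Suc k \<le> N")
    case True
    then show ?thesis using Zp_mod_le[OF assms(1)] by simp
  next
    case False
    have "p ^ N \<le> p ^ Suc k"
      using False assms(2) by (intro power_increasing) auto
    then have "a N < p ^ Suc k"
      using Zp_less[OF assms(1), of N] by linarith
    moreover have "a (Suc k) \<noteq> 0"
      using Zp_mod_le[OF assms(1), of N "Suc k"] False assms(3) by (metis mod_0 nat_le_linear)
    ultimately show ?thesis using assms(3) by simp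
  qed
qed

lemma padic_abs_eq_if_agree:
  assumes "a \<in> Zp p" "b \<in> Zp p" "p > 0" "a N = b N" "a N \<noteq> 0"
  shows "padic_abs p a = padic_abs p b"
proof -
  have "padic_val p a = padic_val p b"
    using padic_val_eq_Least_mod[OF assms(1,3,5)] padic_val_eq_Least_mod[of b p N] assms by simp
  moreover have "a \<noteq> (\<lambda>k. 0)" "b \<noteq> (\<lambda>k. 0)"
    using assms by auto
  ultimately show ?thesis by (simp add: padic_abs_def)
qed

lemma Zp_digits_at_padic_val:
  assumes "a \<in> Zp p" "a \<noteq> (\<lambda>k. 0)"
  shows "a (padic_val p a) = 0" "a (Suc (padic_val p a)) \<noteq> 0"
proof -
  obtain N where "a N \<noteq> 0"
    using assms(2) by auto
  then obtain k where "a (Suc k) \<noteq> 0"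
    using Zp_0[OF assms(1)] by (cases N) auto
  then show "a (Suc (padic_val p a)) \<noteq> 0"
    unfolding padic_val_def by (rule LeastI)
  show "a (padic_val p a) = 0"
  proof (cases "padic_val p a")
    case (Suc k)
    then show ?thesis
      using not_less_Least[of k "\<lambda>k. a (Suc k) \<noteq> 0"] by (simp add: padic_val_def)
  qed (simp add: Zp_0[OF assms(1)])
qed

lemma padic_abs_le_if_zero:
  assumes "a \<in> Zp p" "p > 1" "a K = 0"
  shows "padic_abs p a \<le> 1 / real p ^ K"
proof (cases "a = (\<lambda>k. 0)")
  case False
  have "K \<le> padic_val p a"
  proof (rule ccontr)
    assume "\<not> K \<le> padic_val p a"
    then have "a (Suc (padic_val p a)) = 0"
      using Zp_mod_le[OF assms(1), of "Suc (padic_val p a)" K] assms(3) by simp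
    then show False
      using Zp_digits_at_padic_val[OF assms(1) False] by simp
  qed
  then show ?thesis
    using False assms(2) by (simp add: padic_abs_def frac_le power_increasing)
qed (simp add: padic_abs_def)

lemma Zp_nonzero_if_padic_abs_ge:
  assumes "a \<in> Zp p" "p > 1" "padic_abs p a \<ge> 1 / real p ^ M"
  shows "a (Suc M) \<noteq> 0"
proof
  assume "a (Suc M) = 0"
  then have "padic_abs p a \<le> 1 / real p ^ Suc M"
    using assms by (intro padic_abs_le_if_zero)
  moreover have "1 / real p ^ Suc M < 1 / real p ^ M"
    using assms(2) by (simp add: frac_less2)
  ultimately show False
    using assms(3) by simp
qed

lemma Zp_unit_factor:
  assumes "a \<in> Zp p" "a \<noteq> (\<lambda>k. 0)" "padic_val p a < m"
  obtains u where "a m = p ^ padic_val p a * u" "\<not> p dvd u"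
proof -
  define v where "v = padic_val p a"
  obtain u where u: "a m = p ^ v * u"
    using Zp_pow_dvd[OF assms(1) Zp_digits_at_padic_val(1)[OF assms(1,2)], of m] assms(3)
    unfolding v_def by fastforce
  moreover have "\<not> p dvd u"
  proof
    assume "p dvd u"
    then have "p ^ Suc v dvd a m"
      using u by (simp add: mult_dvd_mono)
    then show False
      using Zp_digits_at_padic_val(2)[OF assms(1,2)] Zp_mod_le[OF assms(1), of "Suc v" m] assms(3)
      by (simp add: v_def)
  qed
  ultimately show ?thesis
    using that unfolding v_def by blast
qed

definition zp_div_pow :: "nat \<Rightarrow> nat \<Rightarrow> (nat \<Rightarrow> nat) \<Rightarrow> nat \<Rightarrow> nat" where
  "zp_div_pow p j a = (\<lambda>k. a (k + j) div p ^ j)"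

lemma zp_div_pow_mult:
  assumes "a \<in> Zp p" "a j = 0"
  shows "a (k + j) = p ^ j * zp_div_pow p j a k"
  using Zp_pow_dvd[OF assms, of "k + j"] by (simp add: zp_div_pow_def)

lemma zp_div_pow_Zp:
  assumes "a \<in> Zp p" "a j = 0" "p > 0"
  shows "zp_div_pow p j a \<in> Zp p"
proof (rule ZpI)
  fix k
  have "p ^ j * zp_div_pow p j a k < p ^ j * p ^ k"
    using zp_div_pow_mult[OF assms(1,2)] Zp_less[OF assms(1), of "k + j"]
    by (simp add: power_add mult.commute)
  then show "zp_div_pow p j a k < p ^ k"
    by simp
  have "p ^ j * zp_div_pow p j a k = p ^ j * zp_div_pow p j a (Suc k) mod (p ^ j * p ^ k)"
    using Zp_mod_Suc[OF assms(1), of "k + j"] zp_div_pow_mult[OF assms(1,2), of k]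
      zp_div_pow_mult[OF assms(1,2), of "Suc k"]
    by (simp add: power_add mult.commute)
  then show "zp_div_pow p j a k = zp_div_pow p j a (Suc k) mod p ^ k"
    using assms(3) by (simp add: mod_mult_mult1)
qed

lemma padic_abs_zp_div_pow:
  assumes "a \<in> Zp p" "a j = 0" "a (Suc j) \<noteq> 0" "p > 0"
  shows "padic_abs p (zp_div_pow p j a) = 1"
proof -
  have "zp_div_pow p j a (Suc 0) \<noteq> 0"
    using zp_div_pow_mult[OF assms(1,2), of 1] assms(3) by simp
  then have "padic_val p (zp_div_pow p j a) = 0" "zp_div_pow p j a \<noteq> (\<lambda>k. 0)"
    unfolding padic_val_def by (auto intro: Least_eq_0)
  then show ?thesis
    by (simp add: padic_abs_def)
qed

section \<open>Homogeneous forms\<close>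

lemma mod_sum_cong:
  fixes f g :: "'a \<Rightarrow> nat"
  assumes "\<And>x. x \<in> A \<Longrightarrow> f x mod m = g x mod m"
  shows "sum f A mod m = sum g A mod m"
proof -
  have "sum f A mod m = (\<Sum>x\<in>A. f x mod m) mod m"
    by (rule mod_sum_eq[symmetric])
  also have "\<dots> = (\<Sum>x\<in>A. g x mod m) mod m"
    using assms by (simp cong: sum.cong)
  finally show ?thesis
    by (simp add: mod_sum_eq)
qed

lemma mod_prod_cong:
  fixes f g :: "'a \<Rightarrow> nat"
  assumes "\<And>x. x \<in> A \<Longrightarrow> f x mod m = g x mod m"
  shows "prod f A mod m = prod g A mod m"
proof -
  have "prod f A mod m = (\<Prod>x\<in>A. f x mod m) mod m"
    by (rule mod_prod_eq[symmetric])
  also have "\<dots> = (\<Prod>x\<in>A. g x mod m) mod m"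
    using assms by (simp cong: prod.cong)
  finally show ?thesis
    by (simp add: mod_prod_eq)
qed

lemma mod_power_cong:
  fixes a b :: nat
  shows "a mod m = b mod m \<Longrightarrow> a ^ k mod m = b ^ k mod m"
  by (metis power_mod)

lemma poly_mod_cong:
  fixes c c' :: "(nat \<Rightarrow> nat) \<Rightarrow> nat" and x x' :: "nat \<Rightarrow> nat"
  assumes "\<And>\<alpha>. \<alpha> \<in> S \<Longrightarrow> c \<alpha> mod m = c' \<alpha> mod m" "\<And>i. i < n \<Longrightarrow> x i mod m = x' i mod m"
  shows "(\<Sum>\<alpha>\<in>S. c \<alpha> * (\<Prod>i<n. x i ^ \<alpha> i)) mod m = (\<Sum>\<alpha>\<in>S. c' \<alpha> * (\<Prod>i<n. x' i ^ \<alpha> i)) mod m"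
  using assms by (intro mod_sum_cong mod_mult_cong mod_prod_cong) (auto intro: mod_power_cong)

lemma zp_poly_eval_Zp:
  assumes "p > 0" "\<forall>\<alpha>\<in>S. c \<alpha> \<in> Zp p" "\<forall>i<n. \<xi> i \<in> Zp p"
  shows "zp_poly_eval p n S c \<xi> \<in> Zp p"
proof (rule ZpI)
  fix k
  show "zp_poly_eval p n S c \<xi> k < p ^ k"
    using assms(1) by (simp add: zp_poly_eval_def)
  have "(\<Sum>\<alpha>\<in>S. c \<alpha> (Suc k) * (\<Prod>i<n. \<xi> i (Suc k) ^ \<alpha> i)) mod p ^ k
      = (\<Sum>\<alpha>\<in>S. c \<alpha> k * (\<Prod>i<n. \<xi> i k ^ \<alpha> i)) mod p ^ k"
    using assms(2,3) by (intro poly_mod_cong) (auto simp: Zp_mod_Suc[of _ p k] Zp_less)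
  then show "zp_poly_eval p n S c \<xi> k = zp_poly_eval p n S c \<xi> (Suc k) mod p ^ k"
    by (simp add: zp_poly_eval_def mod_mod_cancel le_imp_power_dvd)
qed

lemma zp_poly_eval_level_cong:
  assumes "\<forall>i<n. \<xi>' i k = \<xi> i k"
  shows "zp_poly_eval p n S c \<xi>' k = zp_poly_eval p n S c \<xi> k"
proof -
  have "(\<Prod>i<n. \<xi>' i k ^ \<alpha> i) = (\<Prod>i<n. \<xi> i k ^ \<alpha> i)" for \<alpha>
    using assms by (intro prod.cong) auto
  then show ?thesis
    by (simp add: zp_poly_eval_def)
qed

locale zp_homogeneous_form =
  fixes p n d :: nat and S :: "(nat \<Rightarrow> nat) set" and c :: "(nat \<Rightarrow> nat) \<Rightarrow> nat \<Rightarrow> nat"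
  assumes p_gt_1: "p > 1"
    and coeffs_Zp: "\<forall>\<alpha>\<in>S. c \<alpha> \<in> Zp p"
    and homogeneous: "\<forall>\<alpha>\<in>S. (\<Sum>i<n. \<alpha> i) = d"
    and degree_pos: "d \<ge> 1"
begin

lemma p_pos: "p > 0"
  using p_gt_1 by simp

lemma zp_poly_eval_div_pow:
  assumes \<xi>: "\<forall>i<n. \<xi> i \<in> Zp p" and zero: "\<forall>i<n. \<xi> i j = 0"
  shows "zp_poly_eval p n S c \<xi> (d * j + k)
       = p ^ (d * j) * zp_poly_eval p n S c (\<lambda>i. zp_div_pow p j (\<xi> i)) k"
proof -
  define N where "N = d * j + k"
  define z where "z i = \<xi> i N div p ^ j" for i
  have "j + k \<le> N"
    using degree_pos by (simp add: N_def)
  then have \<xi>_N: "\<xi> i N = p ^ j * z i" if "i < n" for i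
    using Zp_pow_dvd[of "\<xi> i" p j N] \<xi> zero that by (simp add: z_def)
  have z_mod: "z i mod p ^ k = zp_div_pow p j (\<xi> i) k mod p ^ k" if "i < n" for i
  proof -
    have "p ^ j * zp_div_pow p j (\<xi> i) k = \<xi> i N mod p ^ (j + k)"
      using zp_div_pow_mult[of "\<xi> i" p j k] Zp_mod_le[of "\<xi> i" p "k + j" N] \<xi> zero that \<open>j + k \<le> N\<close>
      by (simp add: add.commute)
    also have "\<dots> = p ^ j * (z i mod p ^ k)"
      using \<xi>_N[OF that] by (simp add: power_add mod_mult_mult1)
    finally show ?thesis
      using p_gt_1 by simp
  qed
  have monomial: "(\<Prod>i<n. \<xi> i N ^ \<alpha> i) = p ^ (d * j) * (\<Prod>i<n. z i ^ \<alpha> i)" if "\<alpha> \<in> S" for \<alpha>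
  proof -
    have "(\<Prod>i<n. \<xi> i N ^ \<alpha> i) = (\<Prod>i<n. p ^ (j * \<alpha> i) * z i ^ \<alpha> i)"
      using \<xi>_N by (simp add: power_mult_distrib power_mult)
    also have "\<dots> = p ^ (j * (\<Sum>i<n. \<alpha> i)) * (\<Prod>i<n. z i ^ \<alpha> i)"
      by (simp add: prod.distrib power_sum sum_distrib_left)
    finally show ?thesis
      using homogeneous that by (simp add: mult.commute)
  qed
  have "(\<Sum>\<alpha>\<in>S. c \<alpha> N * (\<Prod>i<n. \<xi> i N ^ \<alpha> i))
      = p ^ (d * j) * (\<Sum>\<alpha>\<in>S. c \<alpha> N * (\<Prod>i<n. z i ^ \<alpha> i))"
    by (simp add: monomial sum_distrib_left mult.left_commute cong: sum.cong)
  then have "(\<Sum>\<alpha>\<in>S. c \<alpha> N * (\<Prod>i<n. \<xi> i N ^ \<alpha> i)) mod p ^ N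
      = p ^ (d * j) * ((\<Sum>\<alpha>\<in>S. c \<alpha> N * (\<Prod>i<n. z i ^ \<alpha> i)) mod p ^ k)"
    by (simp add: N_def power_add mod_mult_mult1)
  also have "(\<Sum>\<alpha>\<in>S. c \<alpha> N * (\<Prod>i<n. z i ^ \<alpha> i)) mod p ^ k
      = (\<Sum>\<alpha>\<in>S. c \<alpha> k * (\<Prod>i<n. zp_div_pow p j (\<xi> i) k ^ \<alpha> i)) mod p ^ k"
    using coeffs_Zp z_mod by (intro poly_mod_cong) (auto simp: Zp_mod_le[of _ p k N] N_def)
  finally show ?thesis
    by (simp add: zp_poly_eval_def N_def)
qed

lemma padic_abs_zp_poly_eval_le:
  assumes "\<forall>i<n. \<xi> i \<in> Zp p" "\<forall>i<n. \<xi> i J = 0"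
  shows "padic_abs p (zp_poly_eval p n S c \<xi>) \<le> 1 / real p ^ (d * J)"
proof (rule padic_abs_le_if_zero)
  show "zp_poly_eval p n S c \<xi> \<in> Zp p"
    using p_gt_1 coeffs_Zp assms(1) by (intro zp_poly_eval_Zp) auto
  show "zp_poly_eval p n S c \<xi> (d * J) = 0"
    using zp_poly_eval_div_pow[OF assms, of 0] by (simp add: zp_poly_eval_def)
qed (rule p_gt_1)

end

locale zp_form_sphere_bound = zp_homogeneous_form +
  fixes M :: nat
  assumes sphere_bound: "\<forall>\<xi>. (\<forall>i<n. \<xi> i \<in> Zp p) \<and> (\<exists>i<n. padic_abs p (\<xi> i) = 1) \<longrightarrow>
      padic_abs p (zp_poly_eval p n S c \<xi>) \<ge> 1 / real p ^ M"
begin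

lemma padic_abs_zp_poly_eval_perturb:
  assumes \<xi>: "\<forall>i<n. \<xi> i \<in> Zp p" and \<xi>': "\<forall>i<n. \<xi>' i \<in> Zp p"
    and agree: "\<forall>i<n. \<xi>' i q = \<xi> i q"
    and outside: "\<exists>i<n. \<xi> i J \<noteq> 0" and "J + M \<le> q"
  shows "padic_abs p (zp_poly_eval p n S c \<xi>') = padic_abs p (zp_poly_eval p n S c \<xi>)"
proof -
  have "\<exists>j<J. (\<forall>k\<le>j. \<not> (\<exists>i<n. \<xi> i k \<noteq> 0)) \<and> (\<exists>i<n. \<xi> i (Suc j) \<noteq> 0)"
    by (rule ex_least_nat_less) (use outside \<xi> Zp_0 in auto)
  then obtain j where "j < J" and zero: "\<forall>i<n. \<xi> i j = 0" and "\<exists>i<n. \<xi> i (Suc j) \<noteq> 0"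
    by blast
  then obtain i2 where i2: "i2 < n" "\<xi> i2 (Suc j) \<noteq> 0"
    by blast
  have agree_below: "\<xi>' i k = \<xi> i k" if "i < n" "k \<le> q" for i k
    using Zp_mod_le[of "\<xi>' i" p k q] Zp_mod_le[of "\<xi> i" p k q] \<xi> \<xi>' agree that by simp
  have zero': "\<forall>i<n. \<xi>' i j = 0"
    using zero agree_below \<open>j < J\<close> \<open>J + M \<le> q\<close> by simp
  define \<eta> where "\<eta> = (\<lambda>i. zp_div_pow p j (\<xi> i))"
  define \<eta>' where "\<eta>' = (\<lambda>i. zp_div_pow p j (\<xi>' i))"
  have \<eta>: "\<forall>i<n. \<eta> i \<in> Zp p"
    using zp_div_pow_Zp \<xi> zero p_pos by (simp add: \<eta>_def)
  \<comment> \<open>\<open>\<eta>\<close> lies on the unit sphere, so \<open>f(\<eta>)\<close> is already visible at digit \<open>M + 1\<close>.\<close>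
  have "padic_abs p (\<eta> i2) = 1"
    using padic_abs_zp_div_pow \<xi> zero i2 p_pos by (simp add: \<eta>_def)
  then have "padic_abs p (zp_poly_eval p n S c \<eta>) \<ge> 1 / real p ^ M"
    using sphere_bound \<eta> i2 by blast
  then have nonzero: "zp_poly_eval p n S c \<eta> (Suc M) \<noteq> 0"
    using Zp_nonzero_if_padic_abs_ge zp_poly_eval_Zp[OF p_pos coeffs_Zp \<eta>] p_gt_1 by blast
  have "\<forall>i<n. \<eta>' i (Suc M) = \<eta> i (Suc M)"
    using agree_below \<open>j < J\<close> \<open>J + M \<le> q\<close> by (simp add: \<eta>_def \<eta>'_def zp_div_pow_def)
  then have same: "zp_poly_eval p n S c \<eta>' (Suc M) = zp_poly_eval p n S c \<eta> (Suc M)"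
    by (simp add: zp_poly_eval_level_cong)
  show ?thesis
  proof (rule padic_abs_eq_if_agree[where N = "d * j + Suc M"])
    show "zp_poly_eval p n S c \<xi>' (d * j + Suc M) = zp_poly_eval p n S c \<xi> (d * j + Suc M)"
      using zp_poly_eval_div_pow[OF \<xi> zero, of "Suc M", folded \<eta>_def]
        zp_poly_eval_div_pow[OF \<xi>' zero', of "Suc M", folded \<eta>'_def] same
      by simp
    then show "zp_poly_eval p n S c \<xi>' (d * j + Suc M) \<noteq> 0"
      using zp_poly_eval_div_pow[OF \<xi> zero, of "Suc M", folded \<eta>_def] nonzero p_pos by simp
  qed (use p_pos coeffs_Zp \<xi> \<xi>' zp_poly_eval_Zp in auto)
qed

end

section \<open>Digit coordinates for the Haar measure\<close>

definition digit_measure :: "nat \<Rightarrow> nat measure" where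
  "digit_measure p = uniform_measure (count_space UNIV) {..<p}"

lemma digit_space_eq: "digit_space p = PiM UNIV (\<lambda>_. digit_measure p)"
  by (simp add: digit_space_def digit_measure_def)

lemma sets_digit_measure[simp, measurable_cong]: "sets (digit_measure p) = sets (count_space UNIV)"
  by (simp add: digit_measure_def)

lemma space_digit_measure[simp]: "space (digit_measure p) = UNIV"
  by (simp add: digit_measure_def)

lemma measurable_from_digit_measure: "(\<And>z. f z \<in> space N) \<Longrightarrow> f \<in> measurable (digit_measure p) N"
  by (simp add: measurable_cong_sets[OF sets_digit_measure refl] measurable_count_space_eq1)

lemma prob_space_digit_measure: "p > 0 \<Longrightarrow> prob_space (digit_measure p)"
  unfolding digit_measure_def by (rule prob_space_uniform_measure) auto

lemma prob_space_digit_space: "p > 0 \<Longrightarrow> prob_space (digit_space p)"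
  unfolding digit_space_eq by (intro prob_space_PiM prob_space_digit_measure)

lemma space_digit_space[simp]: "space (digit_space p) = UNIV"
  by (simp add: digit_space_eq space_PiM)

lemma measurable_digit[measurable]: "(\<lambda>e. e j) \<in> measurable (digit_space p) (digit_measure p)"
  unfolding digit_space_eq by (rule measurable_component_singleton) simp

lemma measurable_digit_comp:
  "(\<And>z. h z \<in> space N) \<Longrightarrow> (\<lambda>e. h (e j)) \<in> measurable (digit_space p) N"
  by (rule measurable_compose[OF measurable_digit measurable_from_digit_measure])

lemma bij_betw_Suc_mod:
  assumes "p > 0"
  shows "bij_betw (\<lambda>z. Suc z mod p) {..<p} {..<p}"
proof -
  have "inj_on (\<lambda>z. Suc z mod p) {..<p}"
    by (rule inj_onI) (auto simp: mod_Suc split: if_splits)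
  moreover have "(\<lambda>z. Suc z mod p) ` {..<p} \<subseteq> {..<p}"
    using assms by auto
  ultimately show ?thesis
    by (simp add: bij_betw_def endo_inj_surj)
qed

lemma zp_of_digits_Suc: "zp_of_digits p e (Suc k) = zp_of_digits p e k + e k * p ^ k"
  by (simp add: zp_of_digits_def)

lemma zp_of_digits_less:
  assumes "\<forall>j. e j < p"
  shows "zp_of_digits p e k < p ^ k"
proof (induction k)
  case (Suc k)
  have "zp_of_digits p e (Suc k) < p ^ k + e k * p ^ k"
    using Suc by (simp add: zp_of_digits_Suc)
  also have "\<dots> \<le> p * p ^ k"
    using assms by (metis add_mult_distrib2 less_eq_Suc_le mult.commute mult_1 mult_le_mono1 plus_1_eq_Suc)
  finally show ?case by simp
qed (simp add: zp_of_digits_def)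

lemma zp_of_digits_Zp:
  assumes "\<forall>j. e j < p"
  shows "zp_of_digits p e \<in> Zp p"
proof (rule ZpI)
  fix k
  show "zp_of_digits p e k < p ^ k"
    using zp_of_digits_less[OF assms] .
  then show "zp_of_digits p e k = zp_of_digits p e (Suc k) mod p ^ k"
    by (simp add: zp_of_digits_Suc)
qed

lemma zp_of_digits_eq_0_iff:
  "p > 0 \<Longrightarrow> zp_of_digits p e J = 0 \<longleftrightarrow> (\<forall>j<J. e j = 0)"
  by (auto simp: zp_of_digits_def)

lemma measurable_zp_of_digits_level:
  "(\<lambda>e. zp_of_digits p e k) \<in> measurable (digit_space p) (count_space UNIV)"
proof (induction k)
  case (Suc k)
  have "(\<lambda>e. v + e k * p ^ k) \<in> measurable (digit_space p) (count_space UNIV)" for v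
    by (rule measurable_digit_comp) simp
  then show ?case
    unfolding zp_of_digits_Suc
    by (rule measurable_compose_countable[where f = "\<lambda>v e. v + e k * p ^ k", OF _ Suc])
qed (simp add: zp_of_digits_def)

lemma measurable_zp_of_digits:
  "zp_of_digits p \<in> measurable (digit_space p) (PiM UNIV (\<lambda>_. count_space UNIV))"
proof -
  have "zp_of_digits p = (\<lambda>e. \<lambda>k\<in>UNIV. zp_of_digits p e k)"
    by (simp add: restrict_def)
  also have "\<dots> \<in> measurable (digit_space p) (PiM UNIV (\<lambda>_. count_space UNIV))"
    by (intro measurable_restrict measurable_zp_of_digits_level)
  finally show ?thesis .
qed

(* Adds p^q without carry: the result agrees with e + p^q modulo p^(q+1), and unlike the translation
   by p^q the map is a product of measure-preserving maps of the single digits. *)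
definition rotate_digit :: "nat \<Rightarrow> nat \<Rightarrow> (nat \<Rightarrow> nat) \<Rightarrow> nat \<Rightarrow> nat" where
  "rotate_digit p q e = e(q := Suc (e q) mod p)"

lemma rotate_digit_eq_restrict:
  "rotate_digit p q = (\<lambda>e. \<lambda>j\<in>UNIV. (if j = q then (\<lambda>z. Suc z mod p) else (\<lambda>z. z)) (e j))"
  by (simp add: rotate_digit_def fun_eq_iff)

lemma measurable_rotate_digit: "rotate_digit p q \<in> measurable (digit_space p) (digit_space p)"
  unfolding rotate_digit_eq_restrict
  by (subst (2) digit_space_eq) (intro measurable_restrict measurable_digit_comp, simp)

lemma distr_rotate_digit:
  assumes "p > 0"
  shows "distr (digit_space p) (digit_space p) (rotate_digit p q) = digit_space p"
proof -
  have "distr (digit_space p) (digit_space p) (rotate_digit p q) =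
     PiM UNIV (\<lambda>j. distr (digit_measure p) (digit_measure p) (if j = q then (\<lambda>z. Suc z mod p) else (\<lambda>z. z)))"
    unfolding rotate_digit_eq_restrict digit_space_eq
    by (rule distr_PiM_componentwise) (auto intro: prob_space_digit_measure assms measurable_from_digit_measure)
  also have "\<dots> = PiM UNIV (\<lambda>_. digit_measure p)"
    using distr_uniform_count_space_bij[OF bij_betw_Suc_mod[OF assms]]
    by (intro PiM_cong) (simp_all add: digit_measure_def)
  finally show ?thesis
    by (simp add: digit_space_eq)
qed

lemma zp_of_digits_rotate_digit_le:
  "k \<le> q \<Longrightarrow> zp_of_digits p (rotate_digit p q e) k = zp_of_digits p e k"
  unfolding zp_of_digits_def rotate_digit_def by (intro sum.cong) auto

lemma zp_of_digits_rotate_digit_mod: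
  assumes digits: "\<forall>j. e j < p" and "q < k"
  shows "zp_of_digits p (rotate_digit p q e) k mod p ^ Suc q = (zp_of_digits p e k + p ^ q) mod p ^ Suc q"
proof -
  define A where "A = zp_of_digits p e q"
  have "p > 0"
    using digits by (metis gr_zeroI not_less0)
  have A: "A < p ^ q"
    unfolding A_def by (rule zp_of_digits_less[OF digits])
  have rotated: "\<forall>j. rotate_digit p q e j < p"
    using digits \<open>p > 0\<close> by (simp add: rotate_digit_def)
  have "zp_of_digits p (rotate_digit p q e) k mod p ^ Suc q = zp_of_digits p (rotate_digit p q e) (Suc q)"
    using Zp_mod_le[OF zp_of_digits_Zp[OF rotated], of "Suc q" k] \<open>q < k\<close> by simp
  also have "\<dots> = A + Suc (e q) mod p * p ^ q"
    by (simp add: zp_of_digits_Suc zp_of_digits_rotate_digit_le A_def) (simp add: rotate_digit_def)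
  also have "\<dots> = (A + Suc (e q) * p ^ q) mod (p ^ q * p)"
  proof -
    define b where "b = Suc (e q)"
    have "(A + b * p ^ q) div p ^ q = b" "(A + b * p ^ q) mod p ^ q = A"
      using A \<open>p > 0\<close> by simp_all
    then show ?thesis
      unfolding b_def[symmetric] by (simp add: mod_mult2_eq)
  qed
  also have "\<dots> = (zp_of_digits p e (Suc q) + p ^ q) mod p ^ Suc q"
    by (simp add: zp_of_digits_Suc A_def algebra_simps)
  also have "\<dots> = (zp_of_digits p e k + p ^ q) mod p ^ Suc q"
    using Zp_mod_le[OF zp_of_digits_Zp[OF digits], of "Suc q" k] \<open>q < k\<close> by (simp add: mod_simps)
  finally show ?thesis .
qed

definition digit_vec_space :: "nat \<Rightarrow> nat \<Rightarrow> (nat \<Rightarrow> nat \<Rightarrow> nat) measure" where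
  "digit_vec_space p n = PiM {..<n} (\<lambda>_. digit_space p)"

definition zp_vec_of_digits :: "nat \<Rightarrow> nat \<Rightarrow> (nat \<Rightarrow> nat \<Rightarrow> nat) \<Rightarrow> nat \<Rightarrow> nat \<Rightarrow> nat" where
  "zp_vec_of_digits p n x = (\<lambda>i\<in>{..<n}. zp_of_digits p (x i))"

definition rotate_digit_vec :: "nat \<Rightarrow> nat \<Rightarrow> nat \<Rightarrow> nat \<Rightarrow> (nat \<Rightarrow> nat \<Rightarrow> nat) \<Rightarrow> nat \<Rightarrow> nat \<Rightarrow> nat" where
  "rotate_digit_vec p n i0 q x = (\<lambda>i\<in>{..<n}. if i = i0 then rotate_digit p q (x i) else x i)"

(* The ball p^J Z_p^n in digit coordinates. *)
definition digit_ball :: "nat \<Rightarrow> nat \<Rightarrow> (nat \<Rightarrow> nat \<Rightarrow> nat) set" where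
  "digit_ball n J = (\<Pi>\<^sub>E i\<in>{..<n}. {e. \<forall>j<J. e j = 0})"

lemma prob_space_digit_vec_space: "p > 0 \<Longrightarrow> prob_space (digit_vec_space p n)"
  unfolding digit_vec_space_def by (intro prob_space_PiM prob_space_digit_space)

lemma measurable_digit_vec_component:
  "i < n \<Longrightarrow> (\<lambda>x. x i) \<in> measurable (digit_vec_space p n) (digit_space p)"
  unfolding digit_vec_space_def by (rule measurable_component_singleton) simp

lemma zpn_haar_eq_distr:
  assumes "p > 0"
  shows "zpn_haar p n = distr (digit_vec_space p n) (PiM {..<n} (\<lambda>_. PiM UNIV (\<lambda>_. count_space UNIV)))
      (zp_vec_of_digits p n)"
  unfolding zpn_haar_def zp_haar_def digit_vec_space_def zp_vec_of_digits_def
  by (rule distr_PiM_componentwise[symmetric]) (auto intro: prob_space_digit_space assms measurable_zp_of_digits)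

lemma measurable_zp_vec_of_digits:
  "zp_vec_of_digits p n \<in> measurable (digit_vec_space p n) (PiM {..<n} (\<lambda>_. PiM UNIV (\<lambda>_. count_space UNIV)))"
  unfolding zp_vec_of_digits_def
  by (intro measurable_restrict measurable_compose[OF measurable_digit_vec_component measurable_zp_of_digits])
    simp

lemma measurable_rotate_digit_vec:
  "rotate_digit_vec p n i0 q \<in> measurable (digit_vec_space p n) (digit_vec_space p n)"
proof -
  have "(\<lambda>x. if i = i0 then rotate_digit p q (x i) else x i) \<in> measurable (digit_vec_space p n) (digit_space p)"
    if "i < n" for i
    using measurable_digit_vec_component[OF that]
      measurable_compose[OF measurable_digit_vec_component[OF that] measurable_rotate_digit]
    by simp
  then show ?thesis
    unfolding rotate_digit_vec_def by (subst (2) digit_vec_space_def) (intro measurable_restrict, simp)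
qed

lemma distr_rotate_digit_vec:
  assumes "p > 0"
  shows "distr (digit_vec_space p n) (digit_vec_space p n) (rotate_digit_vec p n i0 q) = digit_vec_space p n"
proof -
  have "rotate_digit_vec p n i0 q = (\<lambda>x. \<lambda>i\<in>{..<n}. (if i = i0 then rotate_digit p q else (\<lambda>e. e)) (x i))"
    by (simp add: rotate_digit_vec_def fun_eq_iff)
  then have "distr (digit_vec_space p n) (digit_vec_space p n) (rotate_digit_vec p n i0 q) =
     PiM {..<n} (\<lambda>i. distr (digit_space p) (digit_space p) (if i = i0 then rotate_digit p q else (\<lambda>e. e)))"
    unfolding digit_vec_space_def
    by (simp only:) (rule distr_PiM_componentwise, auto intro: prob_space_digit_space assms measurable_rotate_digit)
  also have "\<dots> = digit_vec_space p n"
    unfolding digit_vec_space_def by (intro PiM_cong refl) (simp add: distr_rotate_digit assms)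
  finally show ?thesis .
qed

lemma AE_digits_less:
  assumes "p > 0"
  shows "AE x in digit_vec_space p n. \<forall>i<n. \<forall>j. x i j < p"
proof -
  have "AE z in digit_measure p. z < p"
    unfolding digit_measure_def by (rule AE_uniform_measureI) auto
  then have "AE e in digit_space p. e j < p" for j
    unfolding digit_space_eq by (intro AE_PiM_component prob_space_digit_measure assms) auto
  then have "AE e in digit_space p. \<forall>j. e j < p"
    by (simp add: AE_all_countable)
  then have "AE x in digit_vec_space p n. \<forall>i\<in>{..<n}. \<forall>j. x i j < p"
    unfolding digit_vec_space_def by (intro AE_finite_allI AE_PiM_component prob_space_digit_space assms) auto
  then show ?thesis
    by eventually_elim auto
qed

lemma zp_vec_of_digits_Zp:
  "\<forall>i<n. \<forall>j. x i j < p \<Longrightarrow> \<forall>i<n. zp_vec_of_digits p n x i \<in> Zp p"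
  by (simp add: zp_vec_of_digits_def zp_of_digits_Zp)

lemma rotate_digit_vec_digits_less:
  "p > 0 \<Longrightarrow> \<forall>i<n. \<forall>j. x i j < p \<Longrightarrow> \<forall>i<n. \<forall>j. rotate_digit_vec p n i0 q x i j < p"
  by (simp add: rotate_digit_vec_def rotate_digit_def)

lemma zp_vec_of_digits_rotate_digit_vec_le:
  "i < n \<Longrightarrow> k \<le> q \<Longrightarrow> zp_vec_of_digits p n (rotate_digit_vec p n i0 q x) i k = zp_vec_of_digits p n x i k"
  by (simp add: zp_vec_of_digits_def rotate_digit_vec_def zp_of_digits_rotate_digit_le)

lemma leading_zeros_eq_prod_emb:
  "{e. \<forall>j<J. e j = 0} = prod_emb UNIV (\<lambda>_. digit_measure p) {..<J} (\<Pi>\<^sub>E j\<in>{..<J}. {0})"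
  by (auto simp: prod_emb_def PiE_iff restrict_def fun_eq_iff) metis

lemma sets_leading_zeros: "{e. \<forall>j<J. e j = 0} \<in> sets (digit_space p)"
  unfolding digit_space_eq leading_zeros_eq_prod_emb[of J p] by (rule sets_PiM_I) auto

lemma sets_digit_ball: "digit_ball n J \<in> sets (digit_vec_space p n)"
  unfolding digit_ball_def digit_vec_space_def by (intro sets_PiM_I_finite sets_leading_zeros) auto

lemma mem_digit_ball_iff:
  "x \<in> space (digit_vec_space p n) \<Longrightarrow> x \<in> digit_ball n J \<longleftrightarrow> (\<forall>i<n. \<forall>j<J. x i j = 0)"
  by (auto simp: digit_ball_def digit_vec_space_def space_PiM PiE_iff)

lemma measure_digit_ball:
  assumes "p > 0"
  shows "measure (digit_vec_space p n) (digit_ball n J) = (1 / real p) ^ (n * J)"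
proof -
  have "emeasure (digit_space p) {e. \<forall>j<J. e j = 0} = (\<Prod>j\<in>{..<J}. emeasure (digit_measure p) {0})"
    unfolding digit_space_eq leading_zeros_eq_prod_emb[of J p]
    by (rule emeasure_PiM_emb) (auto intro: prob_space_digit_measure assms)
  also have "\<dots> = ennreal ((1 / real p) ^ J)"
  proof -
    have "1 / ennreal (real p) = ennreal (1 / real p)"
      using assms divide_ennreal[of 1 "real p"] by simp
    moreover have "{..<p} \<inter> {0} = {0}"
      using assms by auto
    ultimately show ?thesis
      by (simp add: digit_measure_def ennreal_of_nat_eq_real_of_nat ennreal_power)
  qed
  finally have "emeasure (digit_space p) {e. \<forall>j<J. e j = 0} = ennreal ((1 / real p) ^ J)" .
  moreover have "emeasure (digit_vec_space p n) (digit_ball n J)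
      = (\<Prod>i\<in>{..<n}. emeasure (digit_space p) {e. \<forall>j<J. e j = 0})"
    using emeasure_PiM_emb[of "{..<n}" "\<lambda>_. digit_space p" "{..<n}" "\<lambda>_. {e. \<forall>j<J. e j = 0}"]
      prob_space_digit_space[OF assms] sets_leading_zeros
    by (simp add: digit_vec_space_def digit_ball_def)
  ultimately have "emeasure (digit_vec_space p n) (digit_ball n J) = ennreal ((1 / real p) ^ (n * J))"
    by (simp add: prod_ennreal ennreal_power power_mult mult.commute)
  then show ?thesis
    by (simp add: measure_def)
qed

lemma rotate_digit_vec_mem_digit_ball_iff:
  assumes "x \<in> space (digit_vec_space p n)" "J \<le> q"
  shows "rotate_digit_vec p n i0 q x \<in> digit_ball n J \<longleftrightarrow> x \<in> digit_ball n J"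
proof -
  have "rotate_digit_vec p n i0 q x \<in> digit_ball n J \<longleftrightarrow> (\<forall>i<n. \<forall>j<J. rotate_digit_vec p n i0 q x i j = 0)"
    using measurable_space[OF measurable_rotate_digit_vec assms(1)] by (rule mem_digit_ball_iff)
  also have "\<dots> \<longleftrightarrow> (\<forall>i<n. \<forall>j<J. x i j = 0)"
    using assms(2) by (auto simp: rotate_digit_vec_def rotate_digit_def)
  finally show ?thesis
    using mem_digit_ball_iff[OF assms(1)] by simp
qed

section \<open>The additive character\<close>

lemma cis_add_2pi_multiple: "k \<in> \<int> \<Longrightarrow> cis (x + 2 * pi * k) = cis x"
  by (simp add: cis_mult[symmetric])

lemma cis_2pi_mod:
  assumes "N > 0"
  shows "cis (2 * pi * real (D mod N) / real N) = cis (2 * pi * real D / real N)"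
proof -
  have "real D = real (D mod N) + real N * real (D div N)"
    by (metis add.commute div_mult_mod_eq mult.commute of_nat_add of_nat_mult)
  then have "2 * pi * real D / real N = 2 * pi * real (D mod N) / real N + 2 * pi * real (D div N)"
    using assms by (simp add: field_simps)
  then show ?thesis
    by (simp add: cis_add_2pi_multiple)
qed

lemma cis_2pi_div_ne_1:
  assumes "p > 0" "\<not> p dvd u"
  shows "cis (2 * pi * real u / real p) \<noteq> 1"
proof
  assume "cis (2 * pi * real u / real p) = 1"
  then have "exp (\<i> * complex_of_real (2 * pi * real u / real p)) = 1"
    by (simp add: cis_conv_exp)
  then obtain k :: int where "2 * pi * real u / real p = of_int (2 * k) * pi"
    by (auto simp: exp_eq_1)
  then have "real u = real p * of_int k"
    using assms(1) by (simp add: field_simps)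
  then have "int u = int p * k"
    by (metis of_int_eq_iff of_int_mult of_int_of_nat_eq)
  then show False
    using assms(2) by (metis dvd_triv_left int_dvd_int_iff)
qed

lemma Psi_rep_eq_cis_sum:
  "p > 0 \<Longrightarrow> Psi_rep p n m y \<xi> = cis (2 * pi * real (\<Sum>i<n. y i m * \<xi> i m) / real p ^ m)"
  unfolding Psi_rep_def zp_dot_def using cis_2pi_mod[of "p ^ m"] by simp

lemma Psi_rep_shift:
  assumes "p > 0" and "m = Suc k"
    and "(\<Sum>i<n. y i m * \<xi>' i m) mod p ^ m = ((\<Sum>i<n. y i m * \<xi> i m) + u * p ^ k) mod p ^ m"
  shows "Psi_rep p n m y \<xi>' = Psi_rep p n m y \<xi> * cis (2 * pi * real u / real p)"
proof -
  define D where "D = (\<Sum>i<n. y i m * \<xi> i m)"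
  have "Psi_rep p n m y \<xi>' = cis (2 * pi * real ((D + u * p ^ k) mod p ^ m) / real p ^ m)"
    using assms(3) by (simp add: Psi_rep_def zp_dot_def D_def)
  also have "\<dots> = cis (2 * pi * real (D + u * p ^ k) / real p ^ m)"
    using cis_2pi_mod[of "p ^ m"] assms(1) by simp
  also have "2 * pi * real (D + u * p ^ k) / real p ^ m = 2 * pi * real D / real p ^ m + 2 * pi * real u / real p"
    using assms(1,2) by (simp add: field_simps)
  also have "cis \<dots> = Psi_rep p n m y \<xi> * cis (2 * pi * real u / real p)"
    using Psi_rep_eq_cis_sum[OF assms(1)] by (simp add: cis_mult[symmetric] D_def)
  finally show ?thesis .
qed

lemma dot_rotate_digit_vec_mod:
  assumes digits: "\<forall>i<n. \<forall>j. x i j < p" and "i0 < n"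
    and y: "y i0 m = p ^ v * u" and m: "m = Suc (v + q)"
  shows "(\<Sum>i<n. y i m * zp_vec_of_digits p n (rotate_digit_vec p n i0 q x) i m) mod p ^ m
       = ((\<Sum>i<n. y i m * zp_vec_of_digits p n x i m) + u * p ^ (v + q)) mod p ^ m"
proof -
  define Z where "Z = zp_vec_of_digits p n x"
  define Z' where "Z' = zp_vec_of_digits p n (rotate_digit_vec p n i0 q x)"
  have others: "Z' i m = Z i m" if "i < n" "i \<noteq> i0" for i
    using that by (simp add: Z_def Z'_def zp_vec_of_digits_def rotate_digit_vec_def)
  have "Z' i0 m mod p ^ Suc q = (Z i0 m + p ^ q) mod p ^ Suc q"
    using zp_of_digits_rotate_digit_mod[of "x i0" p q m] digits \<open>i0 < n\<close> m
    by (simp add: Z_def Z'_def zp_vec_of_digits_def rotate_digit_vec_def)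
  then have shifted: "u * Z' i0 m mod p ^ Suc q = (u * Z i0 m + u * p ^ q) mod p ^ Suc q"
    by (metis distrib_left mod_mult_cong)
  have pm: "p ^ m = p ^ v * p ^ Suc q"
    by (simp add: m power_add)
  have "y i0 m * Z' i0 m mod p ^ m = p ^ v * (u * Z' i0 m mod p ^ Suc q)"
    by (simp only: y pm mult.assoc mod_mult_mult1)
  also have "\<dots> = p ^ v * (u * Z i0 m + u * p ^ q) mod p ^ m"
    by (simp only: shifted pm mod_mult_mult1)
  also have "p ^ v * (u * Z i0 m + u * p ^ q) = y i0 m * Z i0 m + u * p ^ (v + q)"
    by (simp add: y power_add algebra_simps)
  finally have rotated: "y i0 m * Z' i0 m mod p ^ m = (y i0 m * Z i0 m + u * p ^ (v + q)) mod p ^ m" .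
  define R where "R = (\<Sum>i\<in>{..<n} - {i0}. y i m * Z i m)"
  have "(\<Sum>i<n. y i m * Z' i m) = y i0 m * Z' i0 m + R"
    using \<open>i0 < n\<close> others by (simp add: sum.remove R_def)
  moreover have "(\<Sum>i<n. y i m * Z i m) = y i0 m * Z i0 m + R"
    using \<open>i0 < n\<close> by (simp add: sum.remove R_def)
  moreover have "(y i0 m * Z' i0 m + R) mod p ^ m = (y i0 m * Z i0 m + u * p ^ (v + q) + R) mod p ^ m"
    using rotated by (rule mod_add_cong) simp
  ultimately show ?thesis
    unfolding Z_def[symmetric] Z'_def[symmetric] by (simp add: ac_simps)
qed

lemma measurable_Psi_rep_digits:
  assumes "p > 0"
  shows "(\<lambda>x. Psi_rep p n m y (zp_vec_of_digits p n x)) \<in> borel_measurable (digit_vec_space p n)"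
proof -
  have digit: "(\<lambda>x. real (x i j)) \<in> borel_measurable (digit_vec_space p n)" if "i < n" for i j
    by (rule measurable_compose[OF measurable_digit_vec_component[OF that] measurable_digit_comp]) simp
  have "real (\<Sum>i<n. y i m * zp_vec_of_digits p n x i m)
      = (\<Sum>i<n. real (y i m) * (\<Sum>j<m. real (x i j) * real p ^ j))" for x
    by (simp add: zp_vec_of_digits_def zp_of_digits_def)
  then have eq: "(\<lambda>x. Psi_rep p n m y (zp_vec_of_digits p n x))
      = (\<lambda>x. cis (2 * pi * (\<Sum>i<n. real (y i m) * (\<Sum>j<m. real (x i j) * real p ^ j)) / real p ^ m))"
    using Psi_rep_eq_cis_sum[OF assms] by simp
  have "(\<lambda>x. \<Sum>i<n. real (y i m) * (\<Sum>j<m. real (x i j) * real p ^ j)) \<in> borel_measurable (digit_vec_space p n)"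
    using digit by (intro borel_measurable_sum borel_measurable_times measurable_const) auto
  then show ?thesis
    unfolding eq cis_conv_exp by measurable
qed

lemma norm_integral_zpn_haar_le:
  fixes F :: "(nat \<Rightarrow> nat \<Rightarrow> nat) \<Rightarrow> 'b::{banach, second_countable_topology}"
  assumes "p > 0" "C \<ge> 0"
    and pulled_back: "integrable (digit_vec_space p n) (\<lambda>x. F (zp_vec_of_digits p n x)) \<Longrightarrow>
      norm (\<integral>x. F (zp_vec_of_digits p n x) \<partial>digit_vec_space p n) \<le> C"
  shows "norm (integral\<^sup>L (zpn_haar p n) F) \<le> C"
proof (cases "integrable (zpn_haar p n) F")
  case True
  note haar = zpn_haar_eq_distr[OF assms(1)]
  have F: "F \<in> borel_measurable (PiM {..<n} (\<lambda>_. PiM UNIV (\<lambda>_. count_space UNIV)))"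
    using borel_measurable_integrable[OF True] by (simp add: haar)
  have "integrable (digit_vec_space p n) (\<lambda>x. F (zp_vec_of_digits p n x))"
    using True by (simp add: haar integrable_distr_eq[OF measurable_zp_vec_of_digits F])
  then show ?thesis
    using pulled_back by (simp add: haar integral_distr[OF measurable_zp_vec_of_digits F])
qed (simp add: not_integrable_integral_eq assms(2))

lemma AE_Psi_rep_rotate_digit_vec:
  assumes "p > 0" "i0 < n" "y i0 m = p ^ v * u" "m = Suc (v + q)"
  shows "AE x in digit_vec_space p n.
    Psi_rep p n m y (zp_vec_of_digits p n (rotate_digit_vec p n i0 q x))
      = cis (2 * pi * real u / real p) * Psi_rep p n m y (zp_vec_of_digits p n x)"
  using AE_digits_less[OF assms(1)]
proof eventually_elim
  case (elim x)
  show ?case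
    using Psi_rep_shift[where \<xi>' = "zp_vec_of_digits p n (rotate_digit_vec p n i0 q x)"
        and \<xi> = "zp_vec_of_digits p n x" and y = y and n = n, OF assms(1,4)
        dot_rotate_digit_vec_mod[of n x p i0 y m v u q, OF elim assms(2-4)]]
    by simp
qed

lemma norm_exp_neg_powr_minus_1_le:
  fixes a b t \<beta> :: real
  assumes "0 \<le> a" "a \<le> b" "t \<ge> 0" "\<beta> > 0"
  shows "norm (complex_of_real (exp (- t * a powr \<beta>)) - 1) \<le> t * b powr \<beta>"
proof -
  have "norm (complex_of_real (exp (- t * a powr \<beta>)) - 1) = \<bar>exp (- t * a powr \<beta>) - 1\<bar>"
    by (metis norm_of_real of_real_1 of_real_diff)
  also have "\<dots> = 1 - exp (- t * a powr \<beta>)"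
    using assms by simp
  also have "\<dots> \<le> t * a powr \<beta>"
    using exp_ge_add_one_self[of "- t * a powr \<beta>"] by simp
  also have "\<dots> \<le> t * b powr \<beta>"
    using assms by (intro mult_left_mono powr_mono2) auto
  finally show ?thesis .
qed

context zp_homogeneous_form
begin

lemma padic_abs_on_digit_ball:
  assumes "x \<in> space (digit_vec_space p n)" "x \<in> digit_ball n J" "\<forall>i<n. \<forall>j. x i j < p"
  shows "padic_abs p (zp_poly_eval p n S c (zp_vec_of_digits p n x)) \<le> 1 / real p ^ (d * J)"
  using assms p_gt_1
  by (intro padic_abs_zp_poly_eval_le zp_vec_of_digits_Zp)
    (auto simp: mem_digit_ball_iff zp_vec_of_digits_def zp_of_digits_eq_0_iff)

end

context zp_form_sphere_bound
begin

lemma AE_padic_abs_rotate_digit_vec_off_ball: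
  assumes "J + M \<le> q"
  shows "AE x in digit_vec_space p n. x \<notin> digit_ball n J \<longrightarrow>
    padic_abs p (zp_poly_eval p n S c (zp_vec_of_digits p n (rotate_digit_vec p n i0 q x)))
      = padic_abs p (zp_poly_eval p n S c (zp_vec_of_digits p n x))"
  using AE_digits_less[OF p_pos, of n] AE_space
proof eventually_elim
  case (elim x)
  show ?case
  proof
    assume "x \<notin> digit_ball n J"
    then obtain i j where "i < n" "j < J" "x i j \<noteq> 0"
      using elim by (auto simp: mem_digit_ball_iff)
    then have "zp_vec_of_digits p n x i J \<noteq> 0"
      using p_pos by (auto simp: zp_vec_of_digits_def zp_of_digits_eq_0_iff)
    then have "\<exists>i<n. zp_vec_of_digits p n x i J \<noteq> 0"
      using \<open>i < n\<close> by blast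
    then show "padic_abs p (zp_poly_eval p n S c (zp_vec_of_digits p n (rotate_digit_vec p n i0 q x)))
      = padic_abs p (zp_poly_eval p n S c (zp_vec_of_digits p n x))"
      using assms elim p_gt_1
      by (intro padic_abs_zp_poly_eval_perturb zp_vec_of_digits_Zp rotate_digit_vec_digits_less)
        (auto simp: zp_vec_of_digits_rotate_digit_vec_le)
  qed
qed

end

lemma qp_norm_rep_level:
  assumes "p > 1" "n \<ge> 1" "\<forall>i<n. y i \<in> Zp p" "qp_norm_rep p n m y > 1"
  obtains i0 v u L where "i0 < n" "y i0 m = p ^ v * u" "\<not> p dvd u" "m = v + L"
    "qp_norm_rep p n m y = real p ^ L"
proof -
  have "zp_norm p n y \<in> (\<lambda>i. padic_abs p (y i)) ` {..<n}"
    unfolding zp_norm_def using assms(2) by (intro Max_in) (auto simp: lessThan_empty_iff)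
  then obtain i0 where i0: "i0 < n" "zp_norm p n y = padic_abs p (y i0)"
    by blast
  define v where "v = padic_val p (y i0)"
  have "y i0 \<noteq> (\<lambda>k. 0)"
    using assms(4) i0 by (auto simp: qp_norm_rep_def padic_abs_def)
  then have norm: "qp_norm_rep p n m y = real p ^ m / real p ^ v"
    using i0 by (simp add: qp_norm_rep_def padic_abs_def v_def)
  then have "real p ^ v < real p ^ m"
    using assms(4) by (simp add: less_divide_eq_1)
  then have "v < m"
    by (rule power_less_imp_less_exp[rotated]) (use assms(1) in simp)
  obtain u where "y i0 m = p ^ v * u" "\<not> p dvd u"
    using Zp_unit_factor[of "y i0" p m] assms(3) i0(1) \<open>y i0 \<noteq> (\<lambda>k. 0)\<close> \<open>v < m\<close>
    unfolding v_def by blast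
  moreover have "qp_norm_rep p n m y = real p ^ (m - v)"
    using norm \<open>v < m\<close> assms(1) by (simp add: power_diff)
  ultimately show ?thesis
    using i0(1) \<open>v < m\<close> by (intro that[of i0 v u "m - v"]) simp_all
qed

lemma level_powr_eq:
  fixes p d n J M :: nat and \<beta> :: real
  assumes "p > 0"
  shows "(1 / real p ^ (d * J)) powr \<beta> * (1 / real p) ^ (n * J)
       = real p powr ((M + 1) * (d * \<beta> + n)) * (real p ^ (J + M + 1)) powr (- d * \<beta> - n)"
proof -
  have pow: "real p ^ k = real p powr real k" for k
    using assms by (simp add: powr_realpow)
  have "(1 / real p ^ (d * J)) powr \<beta> = real p powr (- (real (d * J) * \<beta>))"
    using assms by (simp add: pow powr_powr powr_minus_divide powr_divide)
  moreover have "(1 / real p) ^ (n * J) = real p powr (- real (n * J))"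
    using assms by (simp add: power_one_over pow powr_minus_divide)
  moreover have "(real p ^ (J + M + 1)) powr (- d * \<beta> - n) = real p powr (real (J + M + 1) * (- d * \<beta> - n))"
    by (simp only: pow powr_powr)
  ultimately show ?thesis
    by (simp add: powr_add[symmetric] algebra_simps)
qed

context zp_form_sphere_bound
begin

lemma norm_Z0_le_at_level:
  assumes "\<beta> > 0" "t > 0" and i0: "i0 < n" and y: "y i0 m = p ^ v * u" "\<not> p dvd u"
    and m: "m = v + J + M + 1"
  shows "cmod (Z0 p n S c \<beta> m y t) \<le> t * (1 / real p ^ (d * J)) powr \<beta> * (1 / real p) ^ (n * J)"
  unfolding Z0_def
proof (rule norm_integral_zpn_haar_le[OF p_pos])
  define q where "q = J + M"
  have m_Suc: "m = Suc (v + q)"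
    using m by (simp add: q_def)
  let ?X = "digit_vec_space p n" and ?T = "rotate_digit_vec p n i0 q" and ?B = "digit_ball n J"
  let ?\<psi> = "\<lambda>x. Psi_rep p n m y (zp_vec_of_digits p n x)"
  let ?g = "\<lambda>x. complex_of_real (exp (- t * padic_abs p (zp_poly_eval p n S c (zp_vec_of_digits p n x)) powr \<beta>))"
  assume "integrable ?X (\<lambda>x. ?\<psi> x * ?g x)"
  then have "norm (\<integral>x. ?\<psi> x * ?g x \<partial>?X) \<le> t * (1 / real p ^ (d * J)) powr \<beta> * measure ?X ?B"
  proof (rule norm_integral_le_of_twisted_invariance_off[rotated -1])
    show "finite_measure ?X"
      using prob_space_digit_vec_space[OF p_pos] by (simp add: prob_space_def)
    show "?T \<in> measurable ?X ?X" "distr ?X ?X ?T = ?X"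
      by (simp_all add: measurable_rotate_digit_vec distr_rotate_digit_vec p_pos)
    show "?B \<in> sets ?X" "\<And>x. x \<in> space ?X \<Longrightarrow> ?T x \<in> ?B \<longleftrightarrow> x \<in> ?B"
      by (simp_all add: sets_digit_ball rotate_digit_vec_mem_digit_ball_iff q_def)
    show "?\<psi> \<in> borel_measurable ?X"
      by (rule measurable_Psi_rep_digits[OF p_pos])
    show "\<And>x. norm (?\<psi> x) = 1"
      by (simp add: Psi_rep_def)
    show "AE x in ?X. ?\<psi> (?T x) = cis (2 * pi * real u / real p) * ?\<psi> x"
      by (rule AE_Psi_rep_rotate_digit_vec[where y = y, OF p_pos i0 y(1) m_Suc])
    show "cis (2 * pi * real u / real p) \<noteq> 1"
      by (rule cis_2pi_div_ne_1[OF p_pos y(2)])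
    show "AE x in ?X. x \<notin> ?B \<longrightarrow> ?g (?T x) = ?g x"
      using AE_padic_abs_rotate_digit_vec_off_ball[of J q i0] by (auto simp: q_def)
    show "AE x in ?X. x \<in> ?B \<longrightarrow> norm (?g x - 1) \<le> t * (1 / real p ^ (d * J)) powr \<beta>"
      using AE_digits_less[OF p_pos, of n] AE_space
    proof eventually_elim
      case (elim x)
      show ?case
      proof
        assume "x \<in> ?B"
        show "norm (?g x - 1) \<le> t * (1 / real p ^ (d * J)) powr \<beta>"
          by (rule norm_exp_neg_powr_minus_1_le)
            (use elim assms(1,2) padic_abs_on_digit_ball[OF elim(2) \<open>x \<in> ?B\<close>] padic_abs_nonneg in auto)
      qed
    qed
    show "t * (1 / real p ^ (d * J)) powr \<beta> \<ge> 0"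
      using assms(2) by simp
  qed
  then show "norm (\<integral>x. ?\<psi> x * ?g x \<partial>?X) \<le> t * (1 / real p ^ (d * J)) powr \<beta> * (1 / real p) ^ (n * J)"
    by (simp add: measure_digit_ball p_pos)
qed (use assms(2) in simp)

lemma norm_Z0_le:
  fixes \<beta> t :: real
  assumes "n \<ge> 1" "\<beta> > 0" "t > 0" and y: "\<forall>i<n. y i \<in> Zp p"
    and large: "qp_norm_rep p n m y \<ge> real p ^ (M + 1)"
  shows "cmod (Z0 p n S c \<beta> m y t)
    \<le> real p powr ((M + 1) * (d * \<beta> + n)) * t * qp_norm_rep p n m y powr (- d * \<beta> - n)"
proof -
  have "real p ^ (M + 1) > 1"
    using p_gt_1 by (intro one_less_power) auto
  then have "qp_norm_rep p n m y > 1"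
    using large by linarith
  then obtain i0 v u L where i0: "i0 < n" "y i0 m = p ^ v * u" "\<not> p dvd u" "m = v + L"
    and norm: "qp_norm_rep p n m y = real p ^ L"
    using qp_norm_rep_level[OF p_gt_1 \<open>n \<ge> 1\<close> y] by blast
  have "M + 1 \<le> L"
    by (rule power_le_imp_le_exp[of "real p"]) (use large p_gt_1 norm in auto)
  define J where "J = L - (M + 1)"
  have "L = J + M + 1"
    using \<open>M + 1 \<le> L\<close> by (simp add: J_def)
  then have "cmod (Z0 p n S c \<beta> m y t) \<le> t * ((1 / real p ^ (d * J)) powr \<beta> * (1 / real p) ^ (n * J))"
    using norm_Z0_le_at_level[where y = y, OF \<open>\<beta> > 0\<close> \<open>t > 0\<close> i0(1-3)] i0(4) by (simp add: mult.assoc)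
  then show ?thesis
    using level_powr_eq[OF p_pos, of d J \<beta> n M] norm \<open>L = J + M + 1\<close> by (simp add: mult_ac)
qed

end

theorem lemma4:
  fixes p n d M :: nat and \<beta> :: real
    and S :: "(nat \<Rightarrow> nat) set" and c :: "(nat \<Rightarrow> nat) \<Rightarrow> nat \<Rightarrow> nat"
  assumes "prime p" and "n \<ge> 1" and "\<beta> > 0"
    and "finite S"
    and coeffs: "\<forall>\<alpha>\<in>S. c \<alpha> \<in> Zp p"
    and vars: "\<forall>\<alpha>\<in>S. \<forall>i\<ge>n. \<alpha> i = 0"
    and homog: "\<forall>\<alpha>\<in>S. (\<Sum>i<n. \<alpha> i) = d"
    and "d \<ge> 1"
    and elliptic: "\<forall>xi. (\<forall>i<n. xi i \<in> Zp p) \<longrightarrow>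
        (zp_poly_eval p n S c xi = (\<lambda>k. 0) \<longleftrightarrow> (\<forall>i<n. xi i = (\<lambda>k. 0)))"
    and "M > 0"
    and lowerA: "\<forall>xi. (\<forall>i<n. xi i \<in> Zp p) \<and> (\<exists>i<n. padic_abs p (xi i) = 1) \<longrightarrow>
        padic_abs p (zp_poly_eval p n S c xi) \<ge> 1 / real p ^ M"
  shows "\<exists>R>0. \<exists>C>0. \<forall>m y t. (\<forall>i<n. y i \<in> Zp p) \<and> qp_norm_rep p n m y \<ge> R \<and> t > 0 \<and>
      real p powr ((M + 1) * d * \<beta>) * t * qp_norm_rep p n m y powr (- d * \<beta>) \<le> 1 \<longrightarrow>
      cmod (Z0 p n S c \<beta> m y t) \<le> C * t * qp_norm_rep p n m y powr (- d * \<beta> - n)"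
proof -
  interpret zp_form_sphere_bound p n d S c M
    using assms prime_gt_1_nat[OF \<open>prime p\<close>] by unfold_locales simp_all
  have "\<forall>m y t. (\<forall>i<n. y i \<in> Zp p) \<and> qp_norm_rep p n m y \<ge> real p ^ (M + 1) \<and> t > 0 \<and>
      real p powr ((M + 1) * d * \<beta>) * t * qp_norm_rep p n m y powr (- d * \<beta>) \<le> 1 \<longrightarrow>
      cmod (Z0 p n S c \<beta> m y t)
        \<le> real p powr ((M + 1) * (d * \<beta> + n)) * t * qp_norm_rep p n m y powr (- d * \<beta> - n)"
    using norm_Z0_le[OF \<open>n \<ge> 1\<close> \<open>\<beta> > 0\<close>] by blast
  moreover have "real p ^ (M + 1) > 0" "real p powr ((M + 1) * (d * \<beta> + n)) > 0"
    using p_pos by simp_all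
  ultimately show ?thesis
    by blast
qed

end
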